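(* Let $\sum_i\lambda_i[\alpha_i][\beta_i]=0$ be a homogeneous Plücker relation on $t$-minors of degree $v$. Then for every $m\times n$ matrix $X$, every $t\times m$ matrix $A$ and every multiset $u$ of elements of $\{1,\dots,m\}$ of cardinality $2t$ one has $$\sum_c[c]_A\,[c']_A\sum_i\lambda_i\,[c\,|\,\alpha_i]_X\,[c'\,|\,\beta_i]_X=0,$$ where $c$ ranges over all strictly increasing sequences of length $t$ contained in $u$ (as sub-multisets) and $c'=u\setminus c$ (multiset difference).
   Context: A Plücker relation on $t$-minors is a relation $\sum_i\lambda_i[\alpha_i][\beta_i]=0$ with $\lambda_i\in\mathbb Z$, valid for the maximal minors of the generic $t\times n$ matrix, where $\alpha_i,\beta_i$ are increasing sequences of length $t$ in $\{1,\dots,n\}$ and $[\alpha]$ is the maximal minor with column indices $\alpha$. It is homogeneous of degree $v$ if the multiset union $\alpha_i\cup\beta_i$ equals the multiset $v$ for all $i$. For a $t\times m$ matrix $A$, $[c]_A$ is the maximal minor of $A$ with column indices $c$ (zero if $c$ has repeated entries), and $[c\,|\,\alpha]_X$ is the minor of $X$ with row indices $c$ and column indices $\alpha$. Matrices have entries in a commutative ring (e.g. a field $K$). *)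

theory Defs
  imports "Jordan_Normal_Form.Determinant" "HOL-Library.Multiset"
begin

text \<open>Matrices are functions nat => nat => 'a, with 1-based row/column indices.
  Index sequences are lists of natural numbers.\<close>

definition minor :: "(nat \<Rightarrow> nat \<Rightarrow> 'a::comm_ring_1) \<Rightarrow> nat list \<Rightarrow> nat list \<Rightarrow> 'a" where
  "minor M rs cs = det (mat (length rs) (length rs) (\<lambda>(i,j). M (rs ! i) (cs ! j)))"

definition maxminor :: "nat \<Rightarrow> (nat \<Rightarrow> nat \<Rightarrow> 'a::comm_ring_1) \<Rightarrow> nat list \<Rightarrow> 'a" where
  "maxminor t A cs = minor A [1..<t+1] cs"

definition incr_seq :: "nat \<Rightarrow> nat \<Rightarrow> nat list \<Rightarrow> bool" where
  "incr_seq t n a \<longleftrightarrow> sorted_wrt (<) a \<and> length a = t \<and> set a \<subseteq> {1..n}"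

text \<open>Validity for the
  generic matrix over Z is expressed as validity for all integer matrices
  (equivalent, since Z is an infinite domain).\<close>
definition pluecker_rel :: "nat \<Rightarrow> nat \<Rightarrow> (int \<times> nat list \<times> nat list) list \<Rightarrow> bool" where
  "pluecker_rel t n R \<longleftrightarrow>
     (\<forall>(l,a,b) \<in> set R. incr_seq t n a \<and> incr_seq t n b) \<and>
     (\<forall>G :: nat \<Rightarrow> nat \<Rightarrow> int.
        (\<Sum>(l,a,b)\<leftarrow>R. l * maxminor t G a * maxminor t G b) = 0)"

definition homogeneous_rel :: "nat multiset \<Rightarrow> (int \<times> nat list \<times> nat list) list \<Rightarrow> bool" where
  "homogeneous_rel v R \<longleftrightarrow> (\<forall>(l,a,b) \<in> set R. mset a + mset b = v)"

end

theory Submission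
  imports Defs "HOL-Library.Nat_Bijection"
begin

text \<open>
  Work over the polynomial ring \<open>'a[y]\<close> and give column \<open>k\<close> of \<open>A\<close> the weight \<open>y^(B^k)\<close>
  with \<open>B = 2t + 1\<close>. By Cauchy--Binet, the maximal minor of the product \<open>M = A X\<close> with
  columns \<open>\<alpha>\<close> is \<open>\<Sum>\<^sub>c [c]\<^sub>A [c|\<alpha>]\<^sub>X y^(E c)\<close>, where \<open>E c = \<Sum>\<^sub>k\<^sub>\<in>\<^sub>c B^k\<close> encodes the
  multiset \<open>c\<close> in base \<open>B\<close>. A Pluecker relation is an integer polynomial identity in the
  matrix entries, so it holds over every commutative ring (a Kronecker substitution reduces
  this to the vanishing of a univariate integer polynomial) and in particular for \<open>M\<close>. Since
  multisets of size at most \<open>2t < B\<close> are determined by their codes, the coefficient of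
  \<open>y^(E u)\<close> in the resulting identity is exactly the stated sum.
\<close>

section \<open>Base-\<open>B\<close> codes of multisets\<close>

lemma sum_digits_less_power:
  fixes B :: nat
  assumes "\<forall>v<N. f v < B"
  shows "(\<Sum>v<N. f v * B^v) < B^N"
  using assms
proof (induction N)
  case (Suc N)
  have "(\<Sum>v<Suc N. f v * B^v) < B^N + f N * B^N"
    using Suc by simp
  also have "\<dots> \<le> B * B^N"
    using mult_le_mono1[of "Suc (f N)" B "B^N"] Suc.prems[rule_format, of N] by simp
  finally show ?case by simp
qed simp

lemma digits_unique:
  fixes B :: nat
  assumes "\<forall>v<N. f v < B" "\<forall>v<N. g v < B"
    and "(\<Sum>v<N. f v * B^v) = (\<Sum>v<N. g v * B^v)"
  shows "\<forall>v<N. f v = g v"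
  using assms
proof (induction N)
  case (Suc N)
  have low: "(\<Sum>v<N. f v * B^v) < B^N" "(\<Sum>v<N. g v * B^v) < B^N"
    using Suc.prems by (auto intro!: sum_digits_less_power)
  have eq: "(\<Sum>v<N. f v * B^v) + f N * B^N = (\<Sum>v<N. g v * B^v) + g N * B^N"
    using Suc.prems(3) by simp
  have top_digit: "((\<Sum>v<N. h v * B^v) + h N * B^N) div B^N = h N"
    if "(\<Sum>v<N. h v * B^v) < B^N" for h
  proof -
    have "0 < B^N" using le_less_trans[OF zero_le that] .
    then show ?thesis using that by simp
  qed
  have "f N = g N"
    using top_digit[OF low(1)] top_digit[OF low(2)] eq by simp
  moreover have "\<forall>v<N. f v = g v"
  proof (rule Suc.IH)
    show "(\<Sum>v<N. f v * B^v) = (\<Sum>v<N. g v * B^v)"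
      using eq \<open>f N = g N\<close> by simp
  qed (use Suc.prems in auto)
  ultimately show ?case
    using less_Suc_eq by auto
qed simp

definition encode_mset :: "nat \<Rightarrow> nat multiset \<Rightarrow> nat" where
  "encode_mset B M = (\<Sum>v\<in>#M. B^v)"

lemma encode_mset_plus: "encode_mset B (M + M') = encode_mset B M + encode_mset B M'"
  unfolding encode_mset_def by simp

lemma encode_mset_eq_sum:
  "set_mset M \<subseteq> {..<N} \<Longrightarrow> encode_mset B M = (\<Sum>v<N. count M v * B^v)"
proof (induction M)
  case (add x M)
  then have "x < N" by simp
  have "(\<Sum>v<N. count (add_mset x M) v * B^v) = (\<Sum>v<N. count M v * B^v + (if v = x then B^v else 0))"
    by (intro sum.cong) auto
  also have "\<dots> = (\<Sum>v<N. count M v * B^v) + B^x"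
    using \<open>x < N\<close> by (simp add: sum.distrib)
  finally show ?case
    using add by (simp add: encode_mset_def)
qed (simp add: encode_mset_def)

lemma encode_mset_inj:
  assumes "size M < B" "size M' < B" "encode_mset B M = encode_mset B M'"
  shows "M = M'"
proof -
  obtain N where N: "set_mset M \<subseteq> {..<N}" "set_mset M' \<subseteq> {..<N}"
    using finite_nat_bounded[of "set_mset M \<union> set_mset M'"] by auto
  have "\<forall>v<N. count M v = count M' v"
    using assms le_less_trans[OF count_le_size]
    by (intro digits_unique[of N _ B]) (auto simp: encode_mset_eq_sum[OF N(1)] encode_mset_eq_sum[OF N(2)])
  moreover have "count M v = 0" "count M' v = 0" if "v \<ge> N" for v
    using N that by (auto simp: count_eq_zero_iff)
  ultimately show ?thesis
    by (metis multiset_eqI not_less)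
qed

lemma power_encode_mset: "y ^ encode_mset B M = (\<Prod>v\<in>#M. y ^ B^v)"
  by (induction M) (auto simp: encode_mset_def power_add)

section \<open>Pluecker relations hold over every commutative ring\<close>

text \<open>Substituting \<open>g v = y^(B^v)\<close> turns the hypothesis into the vanishing of the integer
  polynomial \<open>\<Sum>\<^sub>j \<kappa> j y^(E (M j))\<close>; as the code \<open>E\<close> is injective on the monomials, each of its
  coefficients is the total weight of one monomial.\<close>

lemma integer_identity_transfer:
  fixes \<kappa> :: "'j \<Rightarrow> int" and M :: "'j \<Rightarrow> nat multiset"
  assumes J: "finite J" and size_M: "\<forall>j\<in>J. size (M j) < B"
    and vanish: "\<forall>g::nat \<Rightarrow> int. (\<Sum>j\<in>J. \<kappa> j * (\<Prod>v\<in>#M j. g v)) = 0"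
  shows "(\<Sum>j\<in>J. of_int (\<kappa> j) * (\<Prod>v\<in>#M j. g v)) = (0::'b::comm_ring_1)"
proof -
  define p :: "int poly" where "p = (\<Sum>j\<in>J. monom (\<kappa> j) (encode_mset B (M j)))"
  have "poly p y = 0" for y
    using vanish[rule_format, of "\<lambda>v. y ^ B^v"]
    by (simp add: p_def poly_sum poly_monom power_encode_mset)
  then have "p = 0"
    by (simp add: poly_all_0_iff_0[symmetric])
  have coeff_zero: "(\<Sum>j\<in>{j\<in>J. M j = M j0}. \<kappa> j) = 0" if "j0 \<in> J" for j0
  proof -
    have same_code: "encode_mset B (M j) = encode_mset B (M j0) \<longleftrightarrow> M j = M j0" if "j \<in> J" for j
      using encode_mset_inj[of "M j" B "M j0"] size_M \<open>j \<in> J\<close> \<open>j0 \<in> J\<close> by auto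
    have "coeff p (encode_mset B (M j0)) =
        (\<Sum>j\<in>J. if encode_mset B (M j) = encode_mset B (M j0) then \<kappa> j else 0)"
      by (simp add: p_def coeff_sum coeff_monom)
    also have "\<dots> = (\<Sum>j\<in>J. if M j = M j0 then \<kappa> j else 0)"
      using same_code by (intro sum.cong) auto
    also have "\<dots> = (\<Sum>j\<in>{j\<in>J. M j = M j0}. \<kappa> j)"
      using J by (simp add: sum.inter_filter)
    finally have "coeff p (encode_mset B (M j0)) = (\<Sum>j\<in>{j\<in>J. M j = M j0}. \<kappa> j)" .
    with \<open>p = 0\<close> show ?thesis by simp
  qed
  have "(\<Sum>j\<in>J. of_int (\<kappa> j) * (\<Prod>v\<in>#M j. g v)) =
      (\<Sum>N\<in>M ` J. \<Sum>j\<in>{j\<in>J. M j = N}. of_int (\<kappa> j) * (\<Prod>v\<in>#M j. g v))"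
    by (rule sum.image_gen[OF J])
  also have "\<dots> = (\<Sum>N\<in>M ` J. of_int (\<Sum>j\<in>{j\<in>J. M j = N}. \<kappa> j) * (\<Prod>v\<in>#N. g v))"
    unfolding of_int_sum sum_distrib_right by (intro sum.cong refl) auto
  also have "\<dots> = 0"
  proof (rule sum.neutral, rule ballI)
    fix N assume "N \<in> M ` J"
    then obtain j0 where "j0 \<in> J" "N = M j0" by blast
    then show "of_int (\<Sum>j\<in>{j\<in>J. M j = N}. \<kappa> j) * (\<Prod>v\<in>#N. g v) = 0"
      using coeff_zero by simp
  qed
  finally show ?thesis .
qed

lemma minor_Leibniz:
  "minor X c a = (\<Sum>p | p permutes {0..<length c}.
     of_int (sign p) * (\<Prod>i=0..<length c. X (c ! i) (a ! p i)))"
  unfolding minor_def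
  by (subst det_def'[of _ "length c"])
    (auto simp: permutes_in_image intro!: sum.cong arg_cong2[where f="(*)"] prod.cong)

lemma maxminor_Leibniz:
  "maxminor t G a = (\<Sum>p | p permutes {0..<t}.
     of_int (sign p) * (\<Prod>i=0..<t. G (Suc i) (a ! p i)))"
  unfolding maxminor_def minor_Leibniz
  by (auto simp del: upt_Suc intro!: sum.cong arg_cong2[where f="(*)"] prod.cong)

text \<open>The variable \<open>prod_encode (i, k)\<close> stands for the entry in row \<open>i + 1\<close> and column \<open>k\<close>.\<close>

definition entry_valuation :: "(nat \<Rightarrow> nat \<Rightarrow> 'a) \<Rightarrow> nat \<Rightarrow> 'a" where
  "entry_valuation G v = (case prod_decode v of (i, k) \<Rightarrow> G (Suc i) k)"

definition leibniz_monomial :: "nat \<Rightarrow> nat list \<Rightarrow> (nat \<Rightarrow> nat) \<Rightarrow> nat multiset" where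
  "leibniz_monomial t a p = {#prod_encode (i, a ! p i). i \<in># mset_set {0..<t}#}"

lemma size_leibniz_monomial: "size (leibniz_monomial t a p) = t"
  by (simp add: leibniz_monomial_def)

lemma prod_leibniz_monomial:
  "(\<Prod>v\<in>#leibniz_monomial t a p. entry_valuation G v) = (\<Prod>i=0..<t. G (Suc i) (a ! p i))"
  by (simp add: leibniz_monomial_def entry_valuation_def image_mset.compositionality
      comp_def prod_unfold_prod_mset)

lemma maxminor_monomial_expansion:
  "maxminor t G a = (\<Sum>p | p permutes {0..<t}.
     of_int (sign p) * (\<Prod>v\<in>#leibniz_monomial t a p. entry_valuation G v))"
  unfolding maxminor_Leibniz prod_leibniz_monomial ..

text \<open>Index \<open>(q, p, p')\<close> is the term of the Leibniz expansion of the \<open>q\<close>-th summand of \<open>R\<close>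
  that uses the permutation \<open>p\<close> in the first minor and \<open>p'\<close> in the second.\<close>

definition pluecker_terms :: "nat \<Rightarrow> 'c list \<Rightarrow> (nat \<times> (nat \<Rightarrow> nat) \<times> (nat \<Rightarrow> nat)) set" where
  "pluecker_terms t R = {0..<length R} \<times> {p. p permutes {0..<t}} \<times> {p. p permutes {0..<t}}"

definition pluecker_term_coeff ::
    "(int \<times> nat list \<times> nat list) list \<Rightarrow> nat \<times> (nat \<Rightarrow> nat) \<times> (nat \<Rightarrow> nat) \<Rightarrow> int" where
  "pluecker_term_coeff R = (\<lambda>(q, p, p'). case R ! q of (l, _, _) \<Rightarrow> l * sign p * sign p')"

definition pluecker_term_monomial :: "nat \<Rightarrow> (int \<times> nat list \<times> nat list) list \<Rightarrow>
    nat \<times> (nat \<Rightarrow> nat) \<times> (nat \<Rightarrow> nat) \<Rightarrow> nat multiset" where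
  "pluecker_term_monomial t R = (\<lambda>(q, p, p').
     case R ! q of (_, a, b) \<Rightarrow> leibniz_monomial t a p + leibniz_monomial t b p')"

lemma pluecker_sum_monomial_expansion:
  "(\<Sum>(l,a,b)\<leftarrow>R. of_int l * maxminor t G a * maxminor t G b) =
   (\<Sum>j\<in>pluecker_terms t R. of_int (pluecker_term_coeff R j) *
      (\<Prod>v\<in>#pluecker_term_monomial t R j. entry_valuation G v))"
proof -
  let ?P = "{p. p permutes {0..<t}}"
  have "(\<Sum>(l,a,b)\<leftarrow>R. of_int l * maxminor t G a * maxminor t G b) =
      (\<Sum>q=0..<length R. case R ! q of (l,a,b) \<Rightarrow> of_int l * maxminor t G a * maxminor t G b)"
    by (subst sum_list_sum_nth) simp
  also have "\<dots> = (\<Sum>q=0..<length R. \<Sum>p\<in>?P. \<Sum>p'\<in>?P.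
      of_int (pluecker_term_coeff R (q, p, p')) *
      (\<Prod>v\<in>#pluecker_term_monomial t R (q, p, p'). entry_valuation G v))"
    unfolding maxminor_monomial_expansion pluecker_term_coeff_def pluecker_term_monomial_def
    by (intro sum.cong refl)
      (auto split: prod.split simp: sum_product sum_distrib_left mult_ac)
  also have "\<dots> = (\<Sum>j\<in>pluecker_terms t R. of_int (pluecker_term_coeff R j) *
      (\<Prod>v\<in>#pluecker_term_monomial t R j. entry_valuation G v))"
    by (simp add: pluecker_terms_def sum.cartesian_product)
  finally show ?thesis .
qed

lemma pluecker_rel_holds:
  assumes "pluecker_rel t n R"
  shows "(\<Sum>(l,a,b)\<leftarrow>R. of_int l * maxminor t G a * maxminor t G b) = (0::'b::comm_ring_1)"
proof -
  have "(\<Sum>j\<in>pluecker_terms t R. pluecker_term_coeff R j *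
      (\<Prod>v\<in>#pluecker_term_monomial t R j. g v)) = 0" for g :: "nat \<Rightarrow> int"
  proof -
    define G0 where "G0 r k = g (prod_encode (r - 1, k))" for r k
    have "entry_valuation G0 = g"
      by (auto simp: fun_eq_iff G0_def entry_valuation_def split: prod.split
          dest: arg_cong[where f=prod_encode])
    moreover have "(\<Sum>(l,a,b)\<leftarrow>R. l * maxminor t G0 a * maxminor t G0 b) = 0"
      using assms by (simp add: pluecker_rel_def)
    ultimately show ?thesis
      using pluecker_sum_monomial_expansion[where G=G0 and R=R and t=t] by simp
  qed
  moreover have "finite (pluecker_terms t R)"
    by (simp add: pluecker_terms_def finite_permutations)
  moreover have "\<forall>j\<in>pluecker_terms t R. size (pluecker_term_monomial t R j) < 2 * t + 1"
    by (auto simp: pluecker_term_monomial_def size_leibniz_monomial split: prod.split)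
  ultimately show ?thesis
    unfolding pluecker_sum_monomial_expansion by (intro integer_identity_transfer) auto
qed

section \<open>Cauchy--Binet for maximal minors\<close>

lemma minor_permute_rows:
  assumes "length c = t" and "p permutes {0..<t}"
  shows "minor X (map (\<lambda>i. c ! p i) [0..<t]) a = of_int (sign p) * minor X c a"
proof -
  let ?M = "mat t t (\<lambda>(i,j). X (c ! i) (a ! j))"
  have "mat t t (\<lambda>(i,j). ?M $$ (p i, j)) = mat t t (\<lambda>(i,j). X (map (\<lambda>i. c ! p i) [0..<t] ! i) (a ! j))"
    using assms(2) by (intro eq_matI) (auto simp: permutes_in_image)
  then show ?thesis
    using det_permute_rows[of ?M t p] assms unfolding minor_def by simp
qed

lemma minor_eq_0_if_not_inj:
  assumes "\<not> inj_on f {0..<t}"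
  shows "minor X (map f [0..<t]) a = 0"
proof -
  obtain i j where ij: "i < t" "j < t" "i \<noteq> j" "f i = f j"
    using assms unfolding inj_on_def by auto
  let ?M = "mat t t (\<lambda>(i,j). X (map f [0..<t] ! i) (a ! j))"
  have "row ?M i = row ?M j"
    using ij by (auto simp: row_mat)
  then have "det ?M = 0"
    using ij by (intro det_identical_rows[of ?M t i j]) auto
  then show ?thesis
    unfolding minor_def by simp
qed

lemma maxminor_eq_0_if_not_distinct:
  assumes "length d = t" and "\<not> distinct d"
  shows "maxminor t A d = 0"
proof -
  obtain i j where ij: "i < t" "j < t" "i \<noteq> j" "d ! i = d ! j"
    using assms distinct_conv_nth by metis
  let ?M = "mat t t (\<lambda>(i,j). A ([1..<t+1] ! i) (d ! j))"
  have "col ?M i = col ?M j"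
    using ij by (auto simp: col_mat)
  then have "det ?M = 0"
    using ij by (intro det_identical_columns[of ?M t i j]) auto
  then show ?thesis
    unfolding maxminor_def minor_def by (simp del: upt_Suc)
qed

lemma sorted_permute_eq:
  fixes c c' :: "'a::linorder list"
  assumes "sorted_wrt (<) c" "length c = t" "p permutes {0..<t}"
    and "sorted_wrt (<) c'" "length c' = t" "p' permutes {0..<t}"
    and eq: "\<forall>i<t. c ! p i = c' ! p' i"
  shows "c = c' \<and> p = p'"
proof -
  have set_eq: "set d = (\<lambda>i. d ! q i) ` {0..<t}" if "length d = t" "q permutes {0..<t}" for d q
    using that permutes_image[OF that(2)] by (auto simp: set_conv_nth image_image[symmetric])
  have "set c = set c'"
    using set_eq[of c p] set_eq[of c' p'] eq assms by auto
  then have "c = c'"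
    by (rule strict_sorted_equal[OF assms(4,1)])
  moreover have "p i = p' i" for i
  proof (cases "i < t")
    case True
    then have "p i < t" "p' i < t"
      using assms by (auto simp: permutes_in_image)
    then show ?thesis
      using eq True \<open>c = c'\<close> assms(1,2) strict_sorted_iff nth_eq_iff_index_eq by metis
  qed (use assms in \<open>simp add: permutes_not_in\<close>)
  ultimately show ?thesis by auto
qed

lemma inj_on_eq_sorted_permute:
  fixes f :: "nat \<Rightarrow> 'a::linorder"
  assumes inj: "inj_on f {0..<t}"
  obtains p where "p permutes {0..<t}" "\<forall>i<t. sorted_list_of_set (f ` {0..<t}) ! p i = f i"
proof
  let ?c = "sorted_list_of_set (f ` {0..<t})"
  define p where "p i = (if i < t then SOME j. j < t \<and> ?c ! j = f i else i)" for i
  have "length ?c = t"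
    using inj by (simp add: card_image)
  moreover have "f i \<in> set ?c" if "i < t" for i
    using that by simp
  ultimately have ex: "\<exists>j<t. ?c ! j = f i" if "i < t" for i
    using that by (metis in_set_conv_nth)
  have p: "p i < t \<and> ?c ! p i = f i" if "i < t" for i
    using someI_ex[OF ex[OF that]] that unfolding p_def by simp
  then show "\<forall>i<t. ?c ! p i = f i"
    by blast
  show "p permutes {0..<t}"
  proof (rule inj_on_nat_permutes)
    show "inj_on p {0..<t}"
      using p inj by (metis atLeastLessThan_iff inj_on_def)
  qed (use p in \<open>auto simp: p_def\<close>)
qed

lemma bij_betw_sorted_permute:
  "bij_betw (\<lambda>(c, p). restrict (\<lambda>i. c ! p i) {0..<t})
     ({c. incr_seq t m c} \<times> {p. p permutes {0..<t}})
     {f \<in> {0..<t} \<rightarrow>\<^sub>E {1..m}. inj_on f {0..<t}}"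
proof (rule bij_betwI')
  fix x y
  assume "x \<in> {c. incr_seq t m c} \<times> {p. p permutes {0..<t}}"
    and "y \<in> {c. incr_seq t m c} \<times> {p. p permutes {0..<t}}"
  moreover obtain c p c' p' where xy: "x = (c, p)" "y = (c', p')"
    by fastforce
  ultimately have c: "sorted_wrt (<) c" "length c = t" "p permutes {0..<t}"
    and c': "sorted_wrt (<) c'" "length c' = t" "p' permutes {0..<t}"
    by (auto simp: incr_seq_def)
  have "restrict (\<lambda>i. c ! p i) {0..<t} = restrict (\<lambda>i. c' ! p' i) {0..<t} \<Longrightarrow> c = c' \<and> p = p'"
    using sorted_permute_eq[OF c c'] by (metis atLeastLessThan_iff restrict_apply' zero_le)
  then show "((\<lambda>(c, p). restrict (\<lambda>i. c ! p i) {0..<t}) x = (\<lambda>(c, p). restrict (\<lambda>i. c ! p i) {0..<t}) y)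
      = (x = y)"
    using xy by auto
next
  fix x
  assume "x \<in> {c. incr_seq t m c} \<times> {p. p permutes {0..<t}}"
  moreover obtain c p where x: "x = (c, p)"
    by fastforce
  ultimately have c: "incr_seq t m c" and p: "p permutes {0..<t}"
    by auto
  have "c ! p i \<in> {1..m}" if "i < t" for i
  proof -
    have "c ! p i \<in> set c"
      using that c p by (simp add: incr_seq_def permutes_in_image)
    then show ?thesis
      using c by (auto simp: incr_seq_def)
  qed
  moreover have "inj_on (\<lambda>i. c ! p i) {0..<t}"
  proof (rule inj_onI)
    fix i j
    assume ij: "i \<in> {0..<t}" "j \<in> {0..<t}" and "c ! p i = c ! p j"
    moreover have "p i < t" "p j < t" "distinct c" "length c = t"
      using ij c p by (auto simp: incr_seq_def permutes_in_image strict_sorted_iff)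
    ultimately have "p i = p j"
      by (simp add: nth_eq_iff_index_eq)
    then show "i = j"
      using permutes_inj[OF p] by (simp add: inj_eq)
  qed
  ultimately show "(\<lambda>(c, p). restrict (\<lambda>i. c ! p i) {0..<t}) x \<in>
      {f \<in> {0..<t} \<rightarrow>\<^sub>E {1..m}. inj_on f {0..<t}}"
    using x by (auto simp: inj_on_def)
next
  fix f
  assume "f \<in> {f \<in> {0..<t} \<rightarrow>\<^sub>E {1..m}. inj_on f {0..<t}}"
  then have f: "f \<in> {0..<t} \<rightarrow>\<^sub>E {1..m}" and inj: "inj_on f {0..<t}"
    by auto
  let ?c = "sorted_list_of_set (f ` {0..<t})"
  obtain p where p: "p permutes {0..<t}" "\<forall>i<t. ?c ! p i = f i"
    using inj_on_eq_sorted_permute[OF inj] by blast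
  have "length ?c = t"
    using inj by (simp add: card_image)
  moreover have "f ` {0..<t} \<subseteq> {1..m}"
    using PiE_mem[OF f] by auto
  ultimately have "incr_seq t m ?c"
    by (simp add: incr_seq_def)
  moreover have "f = restrict (\<lambda>i. ?c ! p i) {0..<t}"
  proof
    fix i
    show "f i = restrict (\<lambda>i. ?c ! p i) {0..<t} i"
      using p(2) PiE_arb[OF f] by (cases "i < t") simp_all
  qed
  ultimately show "\<exists>x\<in>{c. incr_seq t m c} \<times> {p. p permutes {0..<t}}.
      f = (\<lambda>(c, p). restrict (\<lambda>i. c ! p i) {0..<t}) x"
    using p(1) by (intro bexI[of _ "(?c, p)"]) auto
qed

lemma maxminor_mult_expansion:
  fixes A X :: "nat \<Rightarrow> nat \<Rightarrow> 'a::comm_ring_1"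
  assumes "finite K"
  shows "maxminor t (\<lambda>r j. \<Sum>k\<in>K. A r k * X k j) \<alpha> =
    (\<Sum>f\<in>{0..<t} \<rightarrow>\<^sub>E K. (\<Prod>i=0..<t. A (Suc i) (f i)) * minor X (map f [0..<t]) \<alpha>)"
proof -
  let ?P = "{p. p permutes {0..<t}}"
  have "maxminor t (\<lambda>r j. \<Sum>k\<in>K. A r k * X k j) \<alpha> =
      (\<Sum>p\<in>?P. of_int (sign p) *
        (\<Sum>f\<in>{0..<t} \<rightarrow>\<^sub>E K. \<Prod>i=0..<t. A (Suc i) (f i) * X (f i) (\<alpha> ! p i)))"
    unfolding maxminor_Leibniz using assms by (subst prod_sum_PiE) auto
  also have "\<dots> = (\<Sum>f\<in>{0..<t} \<rightarrow>\<^sub>E K. \<Sum>p\<in>?P.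
      (\<Prod>i=0..<t. A (Suc i) (f i)) * (of_int (sign p) * (\<Prod>i=0..<t. X (f i) (\<alpha> ! p i))))"
    unfolding sum_distrib_left prod.distrib by (subst sum.swap) (simp add: mult.left_commute)
  also have "\<dots> = (\<Sum>f\<in>{0..<t} \<rightarrow>\<^sub>E K. (\<Prod>i=0..<t. A (Suc i) (f i)) * minor X (map f [0..<t]) \<alpha>)"
    unfolding minor_Leibniz sum_distrib_left by simp
  finally show ?thesis .
qed

lemma maxminor_mult_Cauchy_Binet:
  fixes A X :: "nat \<Rightarrow> nat \<Rightarrow> 'a::comm_ring_1"
  shows "maxminor t (\<lambda>r j. \<Sum>k\<in>{1..m}. A r k * X k j) \<alpha> =
    (\<Sum>c | incr_seq t m c. maxminor t A c * minor X c \<alpha>)"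
proof -
  let ?P = "{p. p permutes {0..<t}}"
  let ?F = "{f \<in> {0..<t} \<rightarrow>\<^sub>E {1..m}. inj_on f {0..<t}}"
  let ?g = "\<lambda>f. (\<Prod>i=0..<t. A (Suc i) (f i)) * minor X (map f [0..<t]) \<alpha>"
  have "maxminor t (\<lambda>r j. \<Sum>k\<in>{1..m}. A r k * X k j) \<alpha> = (\<Sum>f\<in>{0..<t} \<rightarrow>\<^sub>E {1..m}. ?g f)"
    by (simp add: maxminor_mult_expansion)
  also have "\<dots> = (\<Sum>f\<in>?F. ?g f)"
    by (rule sum.mono_neutral_right) (auto simp: finite_PiE minor_eq_0_if_not_inj)
  also have "\<dots> = (\<Sum>(c, p)\<in>{c. incr_seq t m c} \<times> ?P. ?g (restrict (\<lambda>i. c ! p i) {0..<t}))"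
    using sum.reindex_bij_betw[OF bij_betw_sorted_permute[of t m], where g = ?g]
    by (simp add: case_prod_unfold)
  also have "\<dots> = (\<Sum>(c, p)\<in>{c. incr_seq t m c} \<times> ?P.
      of_int (sign p) * (\<Prod>i=0..<t. A (Suc i) (c ! p i)) * minor X c \<alpha>)"
  proof (intro sum.cong refl, clarify)
    fix c p
    assume "incr_seq t m c" "p permutes {0..<t}"
    moreover have "map (restrict (\<lambda>i. c ! p i) {0..<t}) [0..<t] = map (\<lambda>i. c ! p i) [0..<t]"
      by simp
    ultimately show "?g (restrict (\<lambda>i. c ! p i) {0..<t}) =
        of_int (sign p) * (\<Prod>i=0..<t. A (Suc i) (c ! p i)) * minor X c \<alpha>"
      using minor_permute_rows[of c t p X \<alpha>] by (simp only: incr_seq_def) (simp add: mult_ac)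
  qed
  also have "\<dots> = (\<Sum>c | incr_seq t m c. maxminor t A c * minor X c \<alpha>)"
    by (simp add: sum.cartesian_product[symmetric] maxminor_Leibniz sum_distrib_right)
  finally show ?thesis .
qed

section \<open>The weighted product and its homogeneous components\<close>

lemma minor_const_poly: "minor (\<lambda>i j. [:X i j:]) c a = [:minor X c a:]"
proof -
  interpret const_hom: comm_ring_hom "\<lambda>x::'a::comm_ring_1. [:x:]"
    by unfold_locales (auto simp: one_pCons)
  have "mat (length c) (length c) (\<lambda>(i,j). [:X (c ! i) (a ! j):]) =
      map_mat (\<lambda>x. [:x:]) (mat (length c) (length c) (\<lambda>(i,j). X (c ! i) (a ! j)))"
    by (rule eq_matI) auto
  then show ?thesis
    unfolding minor_def by simp
qed

lemma prod_monom: "finite I \<Longrightarrow> (\<Prod>i\<in>I. monom (f i) (e i)) = monom (\<Prod>i\<in>I. f i) (\<Sum>i\<in>I. e i)"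
  by (induction rule: finite_induct) (auto simp: mult_monom monom_0)

lemma encode_mset_mset: "encode_mset B (mset c) = (\<Sum>i=0..<length c. B ^ (c ! i))"
  unfolding encode_mset_def mset_map[symmetric] sum_mset_sum_list sum_list_sum_nth by simp

lemma maxminor_column_weights:
  assumes "length c = t"
  shows "maxminor t (\<lambda>r k. monom (A r k) (B^k)) c = monom (maxminor t A c) (encode_mset B (mset c))"
  unfolding maxminor_Leibniz monom_sum
proof (rule sum.cong[OF refl])
  fix p
  assume "p \<in> {p. p permutes {0..<t}}"
  then have "(\<Sum>i=0..<t. B ^ (c ! p i)) = encode_mset B (mset c)"
    using sum.permute[of p "{0..<t}" "\<lambda>i. B ^ (c ! i)"] assms by (simp add: comp_def encode_mset_mset)
  then show "of_int (sign p) * (\<Prod>i=0..<t. monom (A (Suc i) (c ! p i)) (B ^ (c ! p i))) =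
      monom (of_int (sign p) * (\<Prod>i=0..<t. A (Suc i) (c ! p i))) (encode_mset B (mset c))"
    by (simp add: prod_monom of_int_monom mult_monom)
qed

lemma maxminor_weighted_product:
  fixes A X :: "nat \<Rightarrow> nat \<Rightarrow> 'a::comm_ring_1"
  shows "maxminor t (\<lambda>r j. \<Sum>k\<in>{1..m}. monom (A r k) (B^k) * [:X k j:]) a =
    (\<Sum>c | incr_seq t m c. monom (maxminor t A c * minor X c a) (encode_mset B (mset c)))"
  unfolding maxminor_mult_Cauchy_Binet
proof (rule sum.cong[OF refl])
  fix c
  assume "c \<in> {c. incr_seq t m c}"
  then have "maxminor t (\<lambda>r k. monom (A r k) (B^k)) c = monom (maxminor t A c) (encode_mset B (mset c))"
    by (intro maxminor_column_weights) (simp add: incr_seq_def)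
  then show "maxminor t (\<lambda>r k. monom (A r k) (B^k)) c * minor (\<lambda>k j. [:X k j:]) c a =
      monom (maxminor t A c * minor X c a) (encode_mset B (mset c))"
    unfolding minor_const_poly by (simp add: monom_0[symmetric] mult_monom)
qed

lemma coeff_mult_sum_monom:
  assumes "finite I" "finite J"
  shows "coeff ((\<Sum>c\<in>I. monom (f c) (e c)) * (\<Sum>d\<in>J. monom (g d) (e' d))) k =
    (\<Sum>(c, d)\<in>{(c, d) \<in> I \<times> J. e c + e' d = k}. f c * g d)"
proof -
  have "coeff ((\<Sum>c\<in>I. monom (f c) (e c)) * (\<Sum>d\<in>J. monom (g d) (e' d))) k =
      (\<Sum>(c, d)\<in>I \<times> J. if e c + e' d = k then f c * g d else 0)"
    by (simp add: sum_product mult_monom coeff_sum sum.cartesian_product case_prod_unfold coeff_monom)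
  also have "\<dots> = (\<Sum>(c, d)\<in>{(c, d) \<in> I \<times> J. e c + e' d = k}. f c * g d)"
  proof -
    have "{(c, d) \<in> I \<times> J. e c + e' d = k} = {x \<in> I \<times> J. e (fst x) + e' (snd x) = k}"
      by auto
    then show ?thesis
      using assms by (simp add: sum.inter_filter case_prod_unfold)
  qed
  finally show ?thesis .
qed

lemma coeff_sum_list: "coeff (\<Sum>x\<leftarrow>xs. f x) n = (\<Sum>x\<leftarrow>xs. coeff (f x) n)"
  by (induction xs) simp_all

lemma sum_list_sum_swap: "(\<Sum>x\<leftarrow>xs. \<Sum>y\<in>S. f x y) = (\<Sum>y\<in>S. \<Sum>x\<leftarrow>xs. f x y)"
  by (induction xs) (simp_all add: sum.distrib)

definition incr_splits :: "nat \<Rightarrow> nat \<Rightarrow> nat multiset \<Rightarrow> (nat list \<times> nat list) set" where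
  "incr_splits t m u = {(c, d). incr_seq t m c \<and> incr_seq t m d \<and> mset c + mset d = u}"

lemma finite_incr_seq: "finite {c. incr_seq t m c}"
  by (rule finite_subset[of _ "{c. set c \<subseteq> {1..m} \<and> length c = t}"])
    (auto simp: incr_seq_def finite_lists_length_eq)

lemma coeff_pluecker_sum_weighted:
  fixes A X :: "nat \<Rightarrow> nat \<Rightarrow> 'a::comm_ring_1" and m :: nat
  assumes "2 * t < B" "size u < B"
  defines "M \<equiv> \<lambda>r j. \<Sum>k\<in>{1..m}. monom (A r k) (B^k) * [:X k j:]"
  shows "coeff (\<Sum>(l,a,b)\<leftarrow>R. of_int l * maxminor t M a * maxminor t M b) (encode_mset B u) =
    (\<Sum>(c, d)\<in>incr_splits t m u. maxminor t A c * maxminor t A d *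
       (\<Sum>(l,a,b)\<leftarrow>R. of_int l * minor X c a * minor X d b))"
proof -
  let ?I = "{c. incr_seq t m c}"
  let ?E = "\<lambda>c. encode_mset B (mset c)"
  have "{(c, d) \<in> ?I \<times> ?I. ?E c + ?E d = encode_mset B u} = incr_splits t m u"
  proof -
    have "?E c + ?E d = encode_mset B u \<longleftrightarrow> mset c + mset d = u"
      if "incr_seq t m c" "incr_seq t m d" for c d
    proof -
      have "size (mset c + mset d) < B"
        using that assms(1) by (simp add: incr_seq_def)
      then show ?thesis
        using encode_mset_inj[OF _ assms(2)] by (auto simp: encode_mset_plus[symmetric])
    qed
    then show ?thesis
      by (auto simp: incr_splits_def)
  qed
  then have "coeff (maxminor t M a * maxminor t M b) (encode_mset B u) =
      (\<Sum>(c, d)\<in>incr_splits t m u. maxminor t A c * minor X c a * (maxminor t A d * minor X d b))"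
    for a b
    unfolding M_def maxminor_weighted_product by (simp add: coeff_mult_sum_monom finite_incr_seq)
  then show ?thesis
    by (simp add: coeff_sum_list case_prod_unfold of_int_poly sum_distrib_left sum_list_sum_swap
        sum_list_const_mult[symmetric] mult_ac)
qed

lemma sum_submultisets_eq_sum_incr_splits:
  assumes u: "set_mset u \<subseteq> {1..m}" "size u = 2 * t"
    and F: "\<And>c d. length d = t \<Longrightarrow> \<not> distinct d \<Longrightarrow> F c d = 0"
  shows "(\<Sum>c | sorted_wrt (<) c \<and> length c = t \<and> mset c \<subseteq># u.
      F c (sorted_list_of_multiset (u - mset c))) = (\<Sum>(c, d)\<in>incr_splits t m u. F c d)"
proof -
  define C where "C = {c. sorted_wrt (<) c \<and> length c = t \<and> mset c \<subseteq># u}"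
  define rest where "rest c = sorted_list_of_multiset (u - mset c)" for c
  have C_incr: "incr_seq t m c" if "c \<in> C" for c
    using that u(1) set_mset_mono[of "mset c" u] by (auto simp: C_def incr_seq_def)
  have length_rest: "length (rest c) = t" if "c \<in> C" for c
    using that u(2) by (auto simp: C_def rest_def size_Diff_submset simp flip: size_mset)
  have "(\<Sum>c\<in>C. F c (rest c)) = (\<Sum>c | c \<in> C \<and> distinct (rest c). F c (rest c))"
    using F length_rest finite_subset[OF _ finite_incr_seq, of C t m] C_incr
    by (intro sum.mono_neutral_right) auto
  also have "\<dots> = (\<Sum>(c, d)\<in>incr_splits t m u. F c d)"
  proof (rule sum.reindex_bij_witness[where j = "\<lambda>c. (c, rest c)" and i = fst])
    fix c
    assume c: "c \<in> {c. c \<in> C \<and> distinct (rest c)}"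
    then have "sorted_wrt (<) (rest c)"
      by (simp add: rest_def strict_sorted_iff)
    moreover have "set (rest c) \<subseteq> set_mset u" "mset c + mset (rest c) = u"
      using c by (auto simp: C_def rest_def dest: in_diffD)
    ultimately show "(c, rest c) \<in> incr_splits t m u"
      using c C_incr length_rest u(1) by (auto simp: incr_splits_def incr_seq_def)
  next
    fix x
    assume "x \<in> incr_splits t m u"
    then obtain c d where x: "x = (c, d)" "incr_seq t m c" "incr_seq t m d" "mset c + mset d = u"
      by (auto simp: incr_splits_def)
    then have "rest c = d"
      by (auto simp: rest_def incr_seq_def strict_sorted_iff sorted_sort_id)
    with x show "(fst x, rest (fst x)) = x" "fst x \<in> {c. c \<in> C \<and> distinct (rest c)}"
      by (auto simp: C_def incr_seq_def strict_sorted_iff)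
  qed auto
  finally show ?thesis
    unfolding C_def rest_def .
qed

theorem lemma6p2:
  fixes t m n :: nat and R :: "(int \<times> nat list \<times> nat list) list"
    and v u :: "nat multiset"
    and X A :: "nat \<Rightarrow> nat \<Rightarrow> 'a::comm_ring_1"
  assumes "pluecker_rel t n R"
    and "homogeneous_rel v R"
    and "set_mset u \<subseteq> {1..m}"
    and "size u = 2 * t"
  shows "(\<Sum>c\<in>{c. sorted_wrt (<) c \<and> length c = t \<and> mset c \<subseteq># u}.
           let c' = sorted_list_of_multiset (u - mset c) in
           maxminor t A c * maxminor t A c' *
           (\<Sum>(l,a,b)\<leftarrow>R. of_int l * minor X c a * minor X c' b)) = 0"
proof -
  define B where "B = 2 * t + 1"
  define M where "M = (\<lambda>r j. \<Sum>k\<in>{1..m}. monom (A r k) (B^k) * [:X k j:])"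
  define F where "F = (\<lambda>c d. maxminor t A c * maxminor t A d *
      (\<Sum>(l,a,b)\<leftarrow>R. of_int l * minor X c a * minor X d b))"
  have "(\<Sum>(l,a,b)\<leftarrow>R. of_int l * maxminor t M a * maxminor t M b) = 0"
    using assms(1) by (rule pluecker_rel_holds)
  then have "(\<Sum>(c, d)\<in>incr_splits t m u. F c d) = 0"
    using coeff_pluecker_sum_weighted[of t B u A X m R] assms(4) unfolding M_def B_def F_def by simp
  moreover have "F c d = 0" if "length d = t" "\<not> distinct d" for c d
    using maxminor_eq_0_if_not_distinct[OF that, of A] by (simp add: F_def)
  ultimately show ?thesis
    using sum_submultisets_eq_sum_incr_splits[OF assms(3,4), of F] by (simp add: F_def Let_def)
qed

end
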